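(* Let $(m,n)$ be coprime positive integers, $\gamma\in D_{m,n}$, and let $\gamma^*\in D_{m+n,n}$ be obtained by inserting one horizontal unit step immediately after each vertical step of $\gamma$. Then \[ h(\gamma)=h(\gamma^* )-\sum_{p\in V(\gamma^* )}k(p). \]
   Context: For coprime positive $(m,n)$, an $(m,n)$-Dyck path is a lattice path from $(0,0)$ to $(m,n)$ of $m$ horizontal unit steps $(1,0)$ and $n$ vertical unit steps $(0,1)$ lying weakly above the diagonal $y=(n/m)x$; $D_{m,n}$ is the set of them. For a path in $D_{m,n}$ (resp. $D_{m+n,n}$), a parallel line is a line parallel to its diagonal $y=(n/m)x$ (resp. $y=(n/(m+n))x$), and $l(p)$ is the parallel line through $p$. $O(\gamma)$ is the set of pairs $(r_h,r_v)$ with $r_h$ a horizontal step and $r_v$ a vertical step of $\gamma$, $r_v$ appearing after $r_h$; $H(\gamma)$ is the set of pairs in $O(\gamma)$ for which some parallel line intersects both steps; $h(\gamma)=|H(\gamma)|$. An outer vertex is a lattice point of the path immediately after a vertical step and immediately before a horizontal step; for an outer vertex $p$, $k(p)$ is the number of horizontal steps of the path intersecting $l(p)$, not counting the two steps meeting at $p$. $p_0$ is the outer vertex farthest from the diagonal and $V(\cdot)$ is the set of outer vertices other than $p_0$. *)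

theory Defs
  imports "HOL-Analysis.Analysis"
begin

text \<open>A lattice path is a list of unit steps: True = vertical step (0,1),
  False = horizontal step (1,0).  Step i (0-indexed) goes from vertex i to vertex i+1.\<close>

definition vtx :: "bool list \<Rightarrow> nat \<Rightarrow> nat \<times> nat" where
  "vtx w i = (length (filter Not (take i w)), length (filter id (take i w)))"

definition rpt :: "nat \<times> nat \<Rightarrow> real \<times> real" where
  "rpt p = (real (fst p), real (snd p))"

definition is_horiz :: "bool list \<Rightarrow> nat \<Rightarrow> bool" where
  "is_horiz w i \<longleftrightarrow> i < length w \<and> \<not> w ! i"

definition is_vert :: "bool list \<Rightarrow> nat \<Rightarrow> bool" where
  "is_vert w i \<longleftrightarrow> i < length w \<and> w ! i"

definition step_seg :: "bool list \<Rightarrow> nat \<Rightarrow> (real \<times> real) set" where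
  "step_seg w i = closed_segment (rpt (vtx w i)) (rpt (vtx w (Suc i)))"

definition dyck :: "nat \<Rightarrow> nat \<Rightarrow> bool list set" where
  "dyck m n = {w. length (filter Not w) = m \<and> length (filter id w) = n \<and>
     (\<forall>i\<le>length w. real n * real (fst (vtx w i)) \<le> real m * real (snd (vtx w i)))}"

text \<open>Lines parallel to the diagonal y = (n/m) x: the sets m y - n x = c.\<close>
definition par_line :: "nat \<Rightarrow> nat \<Rightarrow> real \<Rightarrow> (real \<times> real) set" where
  "par_line m n c = {q. real m * snd q - real n * fst q = c}"

definition line_through :: "nat \<Rightarrow> nat \<Rightarrow> real \<times> real \<Rightarrow> (real \<times> real) set" where
  "line_through m n p = par_line m n (real m * snd p - real n * fst p)"

definition Hset :: "nat \<Rightarrow> nat \<Rightarrow> bool list \<Rightarrow> (nat \<times> nat) set" where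
  "Hset m n w = {(i, j). i < j \<and> is_horiz w i \<and> is_vert w j \<and>
     (\<exists>c. par_line m n c \<inter> step_seg w i \<noteq> {} \<and> par_line m n c \<inter> step_seg w j \<noteq> {})}"

definition hstat :: "nat \<Rightarrow> nat \<Rightarrow> bool list \<Rightarrow> nat" where
  "hstat m n w = card (Hset m n w)"

text \<open>Outer vertices, indexed by vertex position i: vertex i lies right after
  the vertical step i-1 and right before the horizontal step i.\<close>
definition outer :: "bool list \<Rightarrow> nat set" where
  "outer w = {i. 0 < i \<and> is_vert w (i - 1) \<and> is_horiz w i}"

definition kval :: "nat \<Rightarrow> nat \<Rightarrow> bool list \<Rightarrow> nat \<Rightarrow> nat" where
  "kval m n w i = card {j. is_horiz w j \<and> j \<noteq> i - 1 \<and> j \<noteq> i \<and>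
     line_through m n (rpt (vtx w i)) \<inter> step_seg w j \<noteq> {}}"

text \<open>Distance of vertex i from the diagonal (up to a positive constant factor).\<close>
definition dlevel :: "nat \<Rightarrow> nat \<Rightarrow> bool list \<Rightarrow> nat \<Rightarrow> real" where
  "dlevel m n w i = real m * real (snd (vtx w i)) - real n * real (fst (vtx w i))"

definition p0 :: "nat \<Rightarrow> nat \<Rightarrow> bool list \<Rightarrow> nat" where
  "p0 m n w = (ARG_MAX (dlevel m n w) i. i \<in> outer w)"

definition Vset :: "nat \<Rightarrow> nat \<Rightarrow> bool list \<Rightarrow> nat set" where
  "Vset m n w = outer w - {p0 m n w}"

definition star :: "bool list \<Rightarrow> bool list" where
  "star w = concat (map (\<lambda>b. if b then [True, False] else [False]) w)"

end

theory Submission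
  imports Defs
begin

(* Measure a vertex (x, y) of a path by its level  m y - n x  (and by (m + n) y - n x on the
   starred path).  A horizontal and a vertical step meet a common parallel line iff their level
   intervals overlap.  Starring keeps the levels of the old vertices and turns each vertical step k
   of the path into a vertical step from L k to L k + m + n followed by an inserted horizontal step
   down to L k + m; the outer vertices of the starred path are the tops of these vertical steps.
   Splitting H and k according to whether the horizontal step involved is old or inserted, the
   identity becomes a double count resting on three facts: by coprimality no vertex has level
   L k + m + n and distinct vertical steps have levels that are distinct and never differ by n;
   hence after step k the path crosses level L k + m + n downwards as often as upwards, since it
   starts and ends below it; and the outer vertex p_0 of maximal level has k(p_0) = 0. *)

definition level :: "nat \<Rightarrow> nat \<Rightarrow> bool list \<Rightarrow> nat \<Rightarrow> int" where
  "level a b w t = int a * int (snd (vtx w t)) - int b * int (fst (vtx w t))"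

lemma vtx_0 [simp]: "vtx w 0 = (0, 0)"
  by (simp add: vtx_def)

lemma vtx_Suc:
  "i < length w \<Longrightarrow> vtx w (Suc i) =
     (if w ! i then (fst (vtx w i), Suc (snd (vtx w i))) else (Suc (fst (vtx w i)), snd (vtx w i)))"
  by (simp add: vtx_def take_Suc_conv_app_nth)

lemma fst_vtx_plus_snd_vtx: "t \<le> length w \<Longrightarrow> fst (vtx w t) + snd (vtx w t) = t"
  using sum_length_filter_compl[of id "take t w"] by (simp add: vtx_def comp_def)

lemma int_vtx_sum: "t \<le> length w \<Longrightarrow> int t = int (fst (vtx w t)) + int (snd (vtx w t))"
  using fst_vtx_plus_snd_vtx[of t w] by linarith

lemma snd_vtx_mono: "t \<le> t' \<Longrightarrow> snd (vtx w t) \<le> snd (vtx w t')"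
  by (metis le_add_diff_inverse take_add vtx_def filter_append length_append le_add1 snd_conv)

lemma level_0 [simp]: "level a b w 0 = 0"
  by (simp add: level_def)

lemma level_eq: "t \<le> length w \<Longrightarrow> level a b w t = int (a + b) * int (snd (vtx w t)) - int b * int t"
  by (simp add: level_def int_vtx_sum algebra_simps)

lemma level_Suc_vert: "is_vert w t \<Longrightarrow> level a b w (Suc t) = level a b w t + a"
  by (simp add: is_vert_def level_def vtx_Suc algebra_simps)

lemma level_Suc_horiz: "is_horiz w t \<Longrightarrow> level a b w (Suc t) = level a b w t - b"
  by (simp add: is_horiz_def level_def vtx_Suc algebra_simps)

lemma level_Suc_cases:
  "t < length w \<Longrightarrow>
     is_vert w t \<and> \<not> is_horiz w t \<and> level a b w (Suc t) = level a b w t + a \<or>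
     is_horiz w t \<and> \<not> is_vert w t \<and> level a b w (Suc t) = level a b w t - b"
  using level_Suc_vert[of w t] level_Suc_horiz[of w t] by (auto simp: is_vert_def is_horiz_def)

lemma dlevel_eq_level: "dlevel a b w t = of_int (level a b w t)"
  by (simp add: dlevel_def level_def)

lemma coprime_levels_dvd_iff:
  assumes "coprime a b" "t \<le> length w" "t' \<le> length w"
  shows "int (a + b) dvd level a b w t - level a b w t' \<longleftrightarrow> int (a + b) dvd int t - int t'"
proof -
  define Y where "Y = int (snd (vtx w t)) - int (snd (vtx w t'))"
  have "level a b w t - level a b w t' = int (a + b) * Y - int b * (int t - int t')"
    using assms(2,3) by (simp add: level_eq Y_def algebra_simps)
  moreover have "int (a + b) dvd int (a + b) * Y - z \<longleftrightarrow> int (a + b) dvd z" for z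
    using dvd_add_right_iff[of "int (a + b)" "int (a + b) * Y" "- z"] by simp
  moreover have "coprime (int (a + b)) (int b)"
    using assms(1) by (simp add: coprime_iff_gcd_eq_1)
  ultimately show ?thesis
    by (simp add: coprime_dvd_mult_right_iff)
qed

lemma par_line_meets_step_seg_iff:
  "par_line a b c \<inter> step_seg w i \<noteq> {} \<longleftrightarrow>
     c \<in> closed_segment (of_int (level a b w i)) (of_int (level a b w (Suc i)))"
proof -
  define \<phi> where "\<phi> z = real a * snd z - real b * fst z" for z :: "real \<times> real"
  have "linear \<phi>"
    unfolding \<phi>_def by (rule linearI) (simp_all add: algebra_simps)
  have "\<phi> (rpt (vtx w t)) = of_int (level a b w t)" for t
    by (simp add: \<phi>_def rpt_def level_def)
  then have "closed_segment (of_int (level a b w i)) (of_int (level a b w (Suc i))) = \<phi> ` step_seg w i"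
    unfolding step_seg_def closed_segment_linear_image[OF \<open>linear \<phi>\<close>, symmetric] by simp
  moreover have "par_line a b c \<inter> S \<noteq> {} \<longleftrightarrow> c \<in> \<phi> ` S" for S
    by (auto simp: par_line_def \<phi>_def)
  ultimately show ?thesis
    by simp
qed

lemma par_line_meets_horiz_iff:
  "is_horiz w i \<Longrightarrow> par_line a b c \<inter> step_seg w i \<noteq> {} \<longleftrightarrow>
     of_int (level a b w i) - real b \<le> c \<and> c \<le> of_int (level a b w i)"
  by (auto simp: par_line_meets_step_seg_iff level_Suc_horiz closed_segment_eq_real_ivl)

lemma par_line_meets_vert_iff:
  "is_vert w j \<Longrightarrow> par_line a b c \<inter> step_seg w j \<noteq> {} \<longleftrightarrow>
     of_int (level a b w j) \<le> c \<and> c \<le> of_int (level a b w j) + real a"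
  by (simp add: par_line_meets_step_seg_iff level_Suc_vert closed_segment_eq_real_ivl)

lemma Hset_eq_levels:
  "Hset a b w = {(i, j). i < j \<and> is_horiz w i \<and> is_vert w j \<and>
     level a b w j \<le> level a b w i \<and> level a b w i \<le> level a b w j + a + b}"
proof -
  have "(\<exists>c. par_line a b c \<inter> step_seg w i \<noteq> {} \<and> par_line a b c \<inter> step_seg w j \<noteq> {}) \<longleftrightarrow>
      level a b w j \<le> level a b w i \<and> level a b w i \<le> level a b w j + a + b"
    if "is_horiz w i" "is_vert w j" for i j
  proof -
    let ?x = "level a b w i" and ?y = "level a b w j"
    have "(\<exists>c::real. ?x - b \<le> c \<and> c \<le> ?x \<and> ?y \<le> c \<and> c \<le> ?y + a) \<longleftrightarrow>
        real_of_int ?y \<le> ?x \<and> real_of_int ?x \<le> ?y + a + b"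
    proof
      assume "real_of_int ?y \<le> ?x \<and> real_of_int ?x \<le> ?y + a + b"
      then show "\<exists>c::real. ?x - b \<le> c \<and> c \<le> ?x \<and> ?y \<le> c \<and> c \<le> ?y + a"
        by (intro exI[of _ "max (real_of_int ?x - b) ?y"]) linarith
    qed (elim exE conjE; linarith)
    also have "\<dots> \<longleftrightarrow> ?y \<le> ?x \<and> ?x \<le> ?y + a + b"
      by linarith
    finally show ?thesis
      using that by (simp add: par_line_meets_horiz_iff par_line_meets_vert_iff)
  qed
  then show ?thesis
    unfolding Hset_def by auto
qed

lemma kval_eq_levels:
  "kval a b w p = card {j. is_horiz w j \<and> j \<noteq> p - 1 \<and> j \<noteq> p \<and>
     level a b w j - b \<le> level a b w p \<and> level a b w p \<le> level a b w j}"
proof -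
  have "line_through a b (rpt (vtx w p)) = par_line a b (of_int (level a b w p))"
    by (simp add: line_through_def level_def rpt_def)
  then have "line_through a b (rpt (vtx w p)) \<inter> step_seg w j \<noteq> {} \<longleftrightarrow>
      level a b w j - b \<le> level a b w p \<and> level a b w p \<le> level a b w j" if "is_horiz w j" for j
    using that by (simp add: par_line_meets_horiz_iff) linarith
  then show ?thesis
    unfolding kval_def by (intro arg_cong[where f = card]) auto
qed

lemma up_crossings_eq_down_crossings:
  fixes f :: "nat \<Rightarrow> 'a::linorder"
  assumes "s \<le> e" and "\<And>t. s \<le> t \<Longrightarrow> t \<le> e \<Longrightarrow> f t \<noteq> X"
  shows "card {t \<in> {s..<e}. f t < X \<and> X < f (Suc t)} + of_bool (X < f s) =
         card {t \<in> {s..<e}. f (Suc t) < X \<and> X < f t} + of_bool (X < f e)"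
  using assms
proof (induction e)
  case (Suc e)
  show ?case
  proof (cases "s \<le> e")
    case True
    have split: "{t \<in> {s..<Suc e}. P t} = (if P e then insert e {t \<in> {s..<e}. P t} else {t \<in> {s..<e}. P t})"
      for P
      using True by (auto simp: less_Suc_eq)
    have "f e \<noteq> X" "f (Suc e) \<noteq> X"
      using True Suc.prems by auto
    then show ?thesis
      unfolding split[of "\<lambda>t. f t < X \<and> X < f (Suc t)"] split[of "\<lambda>t. f (Suc t) < X \<and> X < f t"]
      using True Suc by auto
  next
    case False
    then show ?thesis
      using Suc.prems by (simp add: le_Suc_eq)
  qed
qed simp

(* Index in star w of the image of step (and of vertex) t of w: each earlier vertical step
   contributes one inserted step. *)
definition star_pos :: "bool list \<Rightarrow> nat \<Rightarrow> nat" where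
  "star_pos w t = t + snd (vtx w t)"

definition inserted_pos :: "bool list \<Rightarrow> nat \<Rightarrow> nat" where
  "inserted_pos w k = Suc (star_pos w k)"

lemma star_Nil [simp]: "star [] = []"
  and star_Cons [simp]: "star (x # xs) = (if x then [True, False] else [False]) @ star xs"
  and star_append [simp]: "star (xs @ ys) = star xs @ star ys"
  by (simp_all add: star_def)

lemma length_star: "length (star w) = length w + length (filter id w)"
  and length_filter_Not_star: "length (filter Not (star w)) = length w"
  and length_filter_id_star: "length (filter id (star w)) = length (filter id w)"
  by (induction w) auto

lemma length_star_take: "t \<le> length w \<Longrightarrow> length (star (take t w)) = star_pos w t"
  by (simp add: length_star star_pos_def vtx_def)

lemma star_take_drop: "star w = star (take t w) @ star (drop t w)"
  by (metis append_take_drop_id star_append)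

lemma star_split_at:
  "t < length w \<Longrightarrow> star w = star (take t w) @ (if w ! t then [True, False] else [False]) @ star (drop (Suc t) w)"
  using star_take_drop[of w t] by (simp add: Cons_nth_drop_Suc[symmetric])

lemma vtx_star_pos: "t \<le> length w \<Longrightarrow> vtx (star w) (star_pos w t) = (t, snd (vtx w t))"
  using star_take_drop[of w t]
  by (simp add: vtx_def length_star_take[symmetric] length_filter_Not_star length_filter_id_star)

lemma inserted_pos_minus_one [simp]: "inserted_pos w k - Suc 0 = star_pos w k"
  by (simp add: inserted_pos_def)

lemma nth_star_pos_add: "t \<le> length w \<Longrightarrow> star w ! (star_pos w t + i) = star (drop t w) ! i"
  by (subst star_take_drop[of w t]) (simp add: length_star_take[symmetric] nth_append)

lemma nth_star_pos: "t < length w \<Longrightarrow> star w ! star_pos w t = w ! t"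
  using nth_star_pos_add[of t w 0] by (simp add: Cons_nth_drop_Suc[symmetric])

lemma nth_inserted_pos: "is_vert w k \<Longrightarrow> star w ! inserted_pos w k = False"
  using nth_star_pos_add[of k w 1] by (simp add: is_vert_def inserted_pos_def Cons_nth_drop_Suc[symmetric])

lemma vtx_inserted_pos: "is_vert w k \<Longrightarrow> vtx (star w) (inserted_pos w k) = (k, Suc (snd (vtx w k)))"
  by (subst star_split_at[of k])
    (auto simp: is_vert_def inserted_pos_def vtx_def length_star_take[symmetric]
       length_filter_Not_star length_filter_id_star)

lemma star_pos_Suc: "t < length w \<Longrightarrow> star_pos w (Suc t) = star_pos w t + (if w ! t then 2 else 1)"
  by (simp add: star_pos_def vtx_Suc)

lemma star_pos_length: "star_pos w (length w) = length (star w)"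
  by (simp add: star_pos_def vtx_def length_star)

lemma strict_mono_star_pos: "strict_mono (star_pos w)"
  by (rule strict_monoI) (simp add: star_pos_def add_less_le_mono snd_vtx_mono)

lemma inserted_pos_less_star_pos_iff: "is_vert w k \<Longrightarrow> inserted_pos w k < star_pos w t \<longleftrightarrow> k < t"
  using strict_mono_less_eq[OF strict_mono_star_pos[of w], of "Suc k" t]
    strict_mono_less_eq[OF strict_mono_star_pos[of w], of t k] star_pos_Suc[of k w]
  by (auto simp: is_vert_def inserted_pos_def)

lemma inserted_pos_neq_star_pos: "is_vert w k \<Longrightarrow> inserted_pos w k \<noteq> star_pos w t"
  using inserted_pos_less_star_pos_iff[of w k t] strict_mono_less[OF strict_mono_star_pos[of w], of t k]
  by (cases "k < t") (auto simp: inserted_pos_def)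

lemma star_pos_cases:
  assumes "s < star_pos w t" "t \<le> length w"
  obtains i where "i < t" "s = star_pos w i"
    | k where "k < t" "w ! k" "s = inserted_pos w k"
  using assms
proof (induction t)
  case (Suc t)
  show ?case
  proof (cases "s < star_pos w t")
    case True
    then show ?thesis
      using Suc by (meson less_SucI Suc_leD)
  next
    case False
    then have "s = star_pos w t \<or> w ! t \<and> s = inserted_pos w t"
      using Suc.prems star_pos_Suc[of t w] by (auto simp: inserted_pos_def split: if_splits)
    then show ?thesis
      using Suc.prems by blast
  qed
qed (simp add: star_pos_def)

lemma star_pos_less_length_iff: "star_pos w t < length (star w) \<longleftrightarrow> t < length w"
  using strict_mono_less[OF strict_mono_star_pos[of w]] by (simp add: star_pos_length[symmetric])

lemma is_vert_star_pos [simp]: "is_vert (star w) (star_pos w t) \<longleftrightarrow> is_vert w t"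
  and is_horiz_star_pos [simp]: "is_horiz (star w) (star_pos w t) \<longleftrightarrow> is_horiz w t"
  by (auto simp: is_vert_def is_horiz_def star_pos_less_length_iff nth_star_pos)

lemma is_horiz_star_inserted_pos [simp]: "is_vert w k \<Longrightarrow> is_horiz (star w) (inserted_pos w k)"
  using inserted_pos_less_star_pos_iff[of w k "length w"]
  by (simp add: is_horiz_def nth_inserted_pos star_pos_length is_vert_def)

lemma is_vert_star_iff: "is_vert (star w) s \<longleftrightarrow> (\<exists>j. is_vert w j \<and> s = star_pos w j)"
proof
  assume "is_vert (star w) s"
  then have "s < star_pos w (length w)" "star w ! s"
    by (simp_all add: is_vert_def star_pos_length)
  from this(1) show "\<exists>j. is_vert w j \<and> s = star_pos w j"
    by (rule star_pos_cases[OF _ order.refl])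
      (use \<open>star w ! s\<close> in \<open>auto simp: is_vert_def nth_star_pos nth_inserted_pos\<close>)
qed auto

lemma is_horiz_star_iff:
  "is_horiz (star w) s \<longleftrightarrow> (\<exists>i. is_horiz w i \<and> s = star_pos w i) \<or> (\<exists>k. is_vert w k \<and> s = inserted_pos w k)"
proof
  assume "is_horiz (star w) s"
  then have "s < star_pos w (length w)" "\<not> star w ! s"
    by (simp_all add: is_horiz_def star_pos_length)
  from this(1) show "(\<exists>i. is_horiz w i \<and> s = star_pos w i) \<or> (\<exists>k. is_vert w k \<and> s = inserted_pos w k)"
    by (rule star_pos_cases[OF _ order.refl])
      (use \<open>\<not> star w ! s\<close> in \<open>auto simp: is_horiz_def is_vert_def nth_star_pos\<close>)
qed auto

lemma outer_star: "outer (star w) = inserted_pos w ` {k. is_vert w k}"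
proof (intro set_eqI iffI)
  fix p
  assume "p \<in> outer (star w)"
  then have "0 < p" "is_vert (star w) (p - 1)"
    by (auto simp: outer_def)
  then show "p \<in> inserted_pos w ` {k. is_vert w k}"
    by (auto simp: is_vert_star_iff inserted_pos_def image_iff)
next
  fix p
  assume "p \<in> inserted_pos w ` {k. is_vert w k}"
  then show "p \<in> outer (star w)"
    by (auto simp: outer_def is_vert_star_iff is_horiz_star_iff inserted_pos_def)
qed

lemma level_star_pos: "t \<le> length w \<Longrightarrow> level (a + b) b (star w) (star_pos w t) = level a b w t"
  by (simp add: level_def vtx_star_pos int_vtx_sum algebra_simps)

lemma level_inserted_pos:
  "is_vert w k \<Longrightarrow> level (a + b) b (star w) (inserted_pos w k) = level a b w k + a + b"
  using int_vtx_sum[of k w] by (simp add: level_def vtx_inserted_pos is_vert_def algebra_simps)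

(* The pairs of H(star w) whose horizontal step is an old step of w resp. the step inserted after a
   vertical step of w, indexed by steps of w; kstar_old/kstar_ins split k at the outer vertex of
   star w following the vertical step k in the same way. *)
definition Hstar_old :: "nat \<Rightarrow> nat \<Rightarrow> bool list \<Rightarrow> (nat \<times> nat) set" where
  "Hstar_old a b w = {(i, j). i < j \<and> is_horiz w i \<and> is_vert w j \<and>
     level a b w j \<le> level a b w i \<and> level a b w i \<le> level a b w j + a + 2 * b}"

definition Hstar_ins :: "nat \<Rightarrow> nat \<Rightarrow> bool list \<Rightarrow> (nat \<times> nat) set" where
  "Hstar_ins a b w = {(k, j). k < j \<and> is_vert w k \<and> is_vert w j \<and>
     level a b w j \<le> level a b w k + a + b \<and> level a b w k \<le> level a b w j + b}"

definition kstar_old :: "nat \<Rightarrow> nat \<Rightarrow> bool list \<Rightarrow> nat \<Rightarrow> nat set" where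
  "kstar_old a b w k = {i. is_horiz w i \<and>
     level a b w i - b \<le> level a b w k + a + b \<and> level a b w k + a + b \<le> level a b w i}"

definition kstar_ins :: "nat \<Rightarrow> nat \<Rightarrow> bool list \<Rightarrow> nat \<Rightarrow> nat set" where
  "kstar_ins a b w k = {k'. is_vert w k' \<and> k' \<noteq> k \<and>
     level a b w k \<le> level a b w k' \<and> level a b w k' \<le> level a b w k + b}"

lemma finite_pairs_of_steps: "A \<subseteq> {(i, j). i < length w \<and> j < length w} \<Longrightarrow> finite A"
  by (rule finite_subset[of _ "{..<length w} \<times> {..<length w}"]) auto

lemma finite_Hstar_old: "finite (Hstar_old a b w)"
  and finite_Hstar_ins: "finite (Hstar_ins a b w)"
  by (auto intro!: finite_pairs_of_steps simp: Hstar_old_def Hstar_ins_def is_horiz_def is_vert_def)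

lemma finite_kstar_old: "finite (kstar_old a b w k)"
  and finite_kstar_ins: "finite (kstar_ins a b w k)"
  by (auto intro: finite_subset[of _ "{..<length w}"] simp: kstar_old_def kstar_ins_def is_horiz_def is_vert_def)

lemma Hset_subset_Hstar_old: "Hset a b w \<subseteq> Hstar_old a b w"
  by (auto simp: Hset_eq_levels Hstar_old_def)

lemma card_Hstar_old: "card (Hstar_old a b w) = hstat a b w + card (Hstar_old a b w - Hset a b w)"
  using card_Diff_subset[OF _ Hset_subset_Hstar_old] card_mono[OF finite_Hstar_old Hset_subset_Hstar_old]
    finite_subset[OF Hset_subset_Hstar_old finite_Hstar_old]
  by (simp add: hstat_def)

lemma inj_star_pos: "inj (star_pos w)"
  and inj_inserted_pos: "inj (inserted_pos w)"
  using strict_mono_imp_inj_on[OF strict_mono_star_pos] by (auto simp: inj_def inserted_pos_def)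

lemma card_star_pos_image_Un:
  assumes "finite A" "finite B" "\<And>k. k \<in> B \<Longrightarrow> is_vert w k"
  shows "card (star_pos w ` A \<union> inserted_pos w ` B) = card A + card B"
proof -
  have "star_pos w i \<noteq> inserted_pos w k" if "k \<in> B" for i k
    using that assms(3) inserted_pos_neq_star_pos by metis
  then have "star_pos w ` A \<inter> inserted_pos w ` B = {}"
    by blast
  then show ?thesis
    using assms(1,2) by (simp add: card_Un_disjoint card_image inj_on_subset[OF inj_star_pos]
        inj_on_subset[OF inj_inserted_pos])
qed

lemma card_star_pos_pairs_image_Un:
  assumes "finite A" "finite B" "\<And>k j. (k, j) \<in> B \<Longrightarrow> is_vert w k"
  shows "card (map_prod (star_pos w) (star_pos w) ` A \<union> map_prod (inserted_pos w) (star_pos w) ` B) =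
    card A + card B"
proof -
  have "star_pos w i \<noteq> inserted_pos w k" if "(k, j) \<in> B" for i k j
    using that assms(3) inserted_pos_neq_star_pos by metis
  then have "map_prod (star_pos w) (star_pos w) ` A \<inter> map_prod (inserted_pos w) (star_pos w) ` B = {}"
    by fastforce
  moreover have "inj (map_prod (star_pos w) (star_pos w))" "inj (map_prod (inserted_pos w) (star_pos w))"
    using inj_star_pos inj_inserted_pos by (simp_all add: prod.inj_map)
  ultimately show ?thesis
    using assms(1,2) by (simp add: card_Un_disjoint card_image inj_on_subset)
qed

lemma star_pos_pair_in_Hset_star_iff:
  "(star_pos w i, star_pos w j) \<in> Hset (a + b) b (star w) \<longleftrightarrow> (i, j) \<in> Hstar_old a b w"
proof -
  have "level (a + b) b (star w) (star_pos w i) = level a b w i" if "is_horiz w i"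
    using that by (simp add: level_star_pos is_horiz_def)
  moreover have "level (a + b) b (star w) (star_pos w j) = level a b w j" if "is_vert w j"
    using that by (simp add: level_star_pos is_vert_def)
  ultimately show ?thesis
    by (auto simp: Hset_eq_levels Hstar_old_def strict_mono_less[OF strict_mono_star_pos])
qed

lemma inserted_pos_pair_in_Hset_star_iff:
  assumes "is_vert w k"
  shows "(inserted_pos w k, star_pos w j) \<in> Hset (a + b) b (star w) \<longleftrightarrow> (k, j) \<in> Hstar_ins a b w"
proof -
  have "level (a + b) b (star w) (star_pos w j) = level a b w j" if "is_vert w j"
    using that by (simp add: level_star_pos is_vert_def)
  then show ?thesis
    using assms
    by (auto simp: Hset_eq_levels Hstar_ins_def level_inserted_pos inserted_pos_less_star_pos_iff)
qed

lemma Hset_star: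
  "Hset (a + b) b (star w) =
     map_prod (star_pos w) (star_pos w) ` Hstar_old a b w \<union> map_prod (inserted_pos w) (star_pos w) ` Hstar_ins a b w"
proof (intro set_eqI iffI)
  fix x
  assume x: "x \<in> Hset (a + b) b (star w)"
  then obtain s j where "x = (s, star_pos w j)" "is_horiz (star w) s"
    by (auto simp: Hset_eq_levels is_vert_star_iff)
  with x show "x \<in> map_prod (star_pos w) (star_pos w) ` Hstar_old a b w \<union>
      map_prod (inserted_pos w) (star_pos w) ` Hstar_ins a b w"
    by (auto simp: is_horiz_star_iff star_pos_pair_in_Hset_star_iff inserted_pos_pair_in_Hset_star_iff)
qed (auto simp: star_pos_pair_in_Hset_star_iff inserted_pos_pair_in_Hset_star_iff Hstar_ins_def)

lemma hstat_star: "hstat (a + b) b (star w) = card (Hstar_old a b w) + card (Hstar_ins a b w)"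
  unfolding hstat_def Hset_star
  by (rule card_star_pos_pairs_image_Un[OF finite_Hstar_old finite_Hstar_ins]) (simp add: Hstar_ins_def)

lemma kval_inserted_pos:
  assumes "is_vert w k"
  shows "kval (a + b) b (star w) (inserted_pos w k) = card (kstar_old a b w k) + card (kstar_ins a b w k)"
proof -
  let ?l = "level (a + b) b (star w)"
  define K where "K = {j. is_horiz (star w) j \<and> j \<noteq> inserted_pos w k - 1 \<and> j \<noteq> inserted_pos w k \<and>
    ?l j - b \<le> ?l (inserted_pos w k) \<and> ?l (inserted_pos w k) \<le> ?l j}"
  have lk: "?l (inserted_pos w k) = level a b w k + a + b"
    using assms by (rule level_inserted_pos)
  have old: "star_pos w i \<in> K \<longleftrightarrow> i \<in> kstar_old a b w k" for i
  proof -
    have "i \<noteq> k" "?l (star_pos w i) = level a b w i" if "is_horiz w i"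
      using that assms by (auto simp: level_star_pos is_horiz_def is_vert_def)
    then show ?thesis
      using lk inserted_pos_neq_star_pos[OF assms, of i]
      by (auto simp: K_def kstar_old_def inj_eq[OF inj_star_pos])
  qed
  have ins: "inserted_pos w k' \<in> K \<longleftrightarrow> k' \<in> kstar_ins a b w k" if "is_vert w k'" for k'
    using that lk inserted_pos_neq_star_pos[OF that, of k]
    by (auto simp: K_def kstar_ins_def level_inserted_pos inj_eq[OF inj_inserted_pos])
  have "K = star_pos w ` kstar_old a b w k \<union> inserted_pos w ` kstar_ins a b w k"
  proof (intro set_eqI iffI)
    fix j
    assume "j \<in> K"
    then have "is_horiz (star w) j"
      by (simp add: K_def)
    with \<open>j \<in> K\<close> show "j \<in> star_pos w ` kstar_old a b w k \<union> inserted_pos w ` kstar_ins a b w k"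
      using old ins by (auto simp: is_horiz_star_iff)
  qed (auto simp: old ins kstar_ins_def)
  moreover have "card (star_pos w ` kstar_old a b w k \<union> inserted_pos w ` kstar_ins a b w k) =
      card (kstar_old a b w k) + card (kstar_ins a b w k)"
    by (rule card_star_pos_image_Un[OF finite_kstar_old finite_kstar_ins]) (simp add: kstar_ins_def)
  ultimately show ?thesis
    unfolding kval_eq_levels K_def by simp
qed

lemma arg_max_finite:
  fixes f :: "'a \<Rightarrow> 'b::linorder"
  assumes "finite S" "S \<noteq> {}"
  shows "arg_max f (\<lambda>x. x \<in> S) \<in> S \<and> (\<forall>y\<in>S. f y \<le> f (arg_max f (\<lambda>x. x \<in> S)))"
proof -
  have "Max (f ` S) \<in> f ` S"
    using assms by simp
  then obtain x where "x \<in> S" "f x = Max (f ` S)"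
    by auto
  then have "x \<in> S" "\<forall>y\<in>S. f y \<le> f x"
    using assms(1) by auto
  then show ?thesis
    by (intro arg_maxI[where P = "\<lambda>x. x \<in> S" and Q = "\<lambda>z. z \<in> S \<and> (\<forall>y\<in>S. f y \<le> f z)"])
      (auto simp: not_less)
qed

locale dyck_path =
  fixes m n :: nat and g :: "bool list"
  assumes m_pos: "0 < m" and n_pos: "0 < n" and coprime_m_n: "coprime m n" and dyck_g: "g \<in> dyck m n"
begin

abbreviation L :: "nat \<Rightarrow> int" where
  "L \<equiv> level m n g"

abbreviation verts :: "nat set" where
  "verts \<equiv> {k. is_vert g k}"

lemma length_g: "length g = m + n"
  using dyck_g sum_length_filter_compl[of id g] by (simp add: dyck_def comp_def)

lemma level_nonneg: "t \<le> length g \<Longrightarrow> 0 \<le> L t"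
  using dyck_g by (auto simp: dyck_def level_def simp flip: of_nat_mult)

lemma level_length: "L (length g) = 0"
  using dyck_g by (simp add: dyck_def level_def vtx_def)

lemma level_diff_dvd_imp_eq:
  assumes "t \<le> length g" "t' \<le> length g" "int (m + n) dvd L t - L t'" "\<bar>int t - int t'\<bar> < int (m + n)"
  shows "t = t'"
proof -
  have "int (m + n) dvd int t - int t'"
    using assms(1-3) coprime_levels_dvd_iff[OF coprime_m_n] by blast
  then show ?thesis
    using assms(4) dvd_imp_le_int[of "int t - int t'" "int (m + n)"] by fastforce
qed

lemma level_inj: "t < length g \<Longrightarrow> t' < length g \<Longrightarrow> L t = L t' \<Longrightarrow> t = t'"
  by (rule level_diff_dvd_imp_eq) (auto simp: length_g abs_less_iff)

lemma level_neq_shift: "t \<le> length g \<Longrightarrow> k < length g \<Longrightarrow> L t \<noteq> L k + int (m + n)"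
proof
  assume t: "t \<le> length g" and k: "k < length g" and shift: "L t = L k + int (m + n)"
  show False
  proof (cases "t = length g \<and> k = 0")
    case True
    then show False
      using shift level_length m_pos by simp
  next
    case False
    then have "t = k"
      using t k shift by (intro level_diff_dvd_imp_eq) (auto simp: length_g abs_less_iff)
    then show False
      using shift m_pos by simp
  qed
qed

lemma finite_verts: "finite verts"
  by (rule finite_subset[of _ "{..<length g}"]) (auto simp: is_vert_def)

lemma verts_nonempty: "verts \<noteq> {}"
proof -
  have "True \<in> set g"
    using dyck_g n_pos by (auto simp: dyck_def filter_empty_conv)
  then show ?thesis
    by (auto simp: is_vert_def in_set_conv_nth)
qed

lemma level_le_highest_vert:
  assumes "k \<in> verts" "\<And>j. j \<in> verts \<Longrightarrow> L j \<le> L k" "t \<le> length g"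
  shows "L t \<le> L k + m"
  using assms(3)
proof (induction t)
  case 0
  show ?case
    using level_nonneg[of k] assms(1) by (simp add: is_vert_def)
next
  case (Suc t)
  then have "is_vert g t \<or> is_horiz g t"
    by (auto simp: is_vert_def is_horiz_def)
  then show ?case
    using Suc assms(2) by (auto simp: level_Suc_vert level_Suc_horiz)
qed

lemma vert_levels_neq:
  assumes "j \<in> verts" "k \<in> verts"
  shows "j \<noteq> k \<Longrightarrow> L j \<noteq> L k" and "L j \<noteq> L k + n"
proof -
  show "j \<noteq> k \<Longrightarrow> L j \<noteq> L k"
    using assms level_inj by (auto simp: is_vert_def)
  have "L (Suc j) \<noteq> L k + int (m + n)"
    using assms by (intro level_neq_shift) (auto simp: is_vert_def)
  then show "L j \<noteq> L k + n"
    using assms(1) by (auto simp: level_Suc_vert)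
qed

lemma p0_star:
  obtains k0 where "k0 \<in> verts" "\<And>k. k \<in> verts \<Longrightarrow> L k \<le> L k0"
    "p0 (m + n) n (star g) = inserted_pos g k0"
proof -
  have "finite (outer (star g))" "outer (star g) \<noteq> {}"
    using finite_verts verts_nonempty by (simp_all add: outer_star)
  from arg_max_finite[OF this, of "dlevel (m + n) n (star g)"]
  obtain k0 where k0: "k0 \<in> verts" "p0 (m + n) n (star g) = inserted_pos g k0"
    and max: "\<And>k. k \<in> verts \<Longrightarrow> dlevel (m + n) n (star g) (inserted_pos g k) \<le>
       dlevel (m + n) n (star g) (inserted_pos g k0)"
    unfolding p0_def[symmetric] by (auto simp: outer_star)
  have "L k \<le> L k0" if "k \<in> verts" for k
    using max[OF that] that k0(1) by (simp add: dlevel_eq_level level_inserted_pos)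
  then show ?thesis
    using that k0 by blast
qed

lemma kstar_empty_at_highest:
  assumes "k0 \<in> verts" "\<And>k. k \<in> verts \<Longrightarrow> L k \<le> L k0"
  shows "kstar_old m n g k0 = {}" and "kstar_ins m n g k0 = {}"
proof -
  have "L i \<le> L k0 + m" if "is_horiz g i" for i
    using level_le_highest_vert[of k0 i] assms that by (auto simp: is_horiz_def)
  then show "kstar_old m n g k0 = {}"
    using n_pos by (force simp: kstar_old_def)
  show "kstar_ins m n g k0 = {}"
    using assms vert_levels_neq(1)[of _ k0] by (force simp: kstar_ins_def)
qed

lemma sum_kval_Vset:
  "(\<Sum>p\<in>Vset (m + n) n (star g). kval (m + n) n (star g) p) =
     (\<Sum>k\<in>verts. card (kstar_old m n g k) + card (kstar_ins m n g k))"
proof -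
  obtain k0 where k0: "k0 \<in> verts" "\<And>k. k \<in> verts \<Longrightarrow> L k \<le> L k0"
    "p0 (m + n) n (star g) = inserted_pos g k0"
    using p0_star by blast
  have "kval (m + n) n (star g) (p0 (m + n) n (star g)) = 0"
    using k0 kval_inserted_pos[of g k0] kstar_empty_at_highest[OF k0(1,2)] by simp
  moreover have "p0 (m + n) n (star g) \<in> outer (star g)"
    using k0 by (simp add: outer_star)
  ultimately have "(\<Sum>p\<in>Vset (m + n) n (star g). kval (m + n) n (star g) p) =
      (\<Sum>p\<in>outer (star g). kval (m + n) n (star g) p)"
    unfolding Vset_def using finite_verts by (simp add: sum.remove outer_star)
  also have "\<dots> = (\<Sum>k\<in>verts. card (kstar_old m n g k) + card (kstar_ins m n g k))"
    unfolding outer_star using inj_inserted_pos[of g]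
    by (simp add: sum.reindex inj_on_subset kval_inserted_pos)
  finally show ?thesis .
qed

definition crossing_verts :: "nat \<Rightarrow> nat set" where
  "crossing_verts k = {j. is_vert g j \<and> k < j \<and> L j \<le> L k + m + n \<and> L k + n \<le> L j}"

lemma finite_crossing_verts: "finite (crossing_verts k)"
  by (rule finite_subset[OF _ finite_verts]) (auto simp: crossing_verts_def)

lemma level_neq_outer_level: "k \<in> verts \<Longrightarrow> t \<le> length g \<Longrightarrow> L t \<noteq> L k + m + n"
  using level_neq_shift[of t k] by (simp add: is_vert_def add.assoc)

lemma up_crossings_after_vert:
  assumes "k \<in> verts"
  shows "{t \<in> {Suc k..<length g}. L t < L k + m + n \<and> L k + m + n < L (Suc t)} = crossing_verts k"
proof (intro set_eqI)
  fix t
  show "t \<in> {t \<in> {Suc k..<length g}. L t < L k + m + n \<and> L k + m + n < L (Suc t)} \<longleftrightarrow>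
      t \<in> crossing_verts k"
  proof (cases "t < length g")
    case True
    then show ?thesis
      using level_Suc_cases[OF True, of m n] level_neq_outer_level[OF assms, of t]
        level_neq_outer_level[OF assms, of "Suc t"] n_pos
      by (auto simp: crossing_verts_def Suc_le_eq)
  qed (auto simp: crossing_verts_def is_vert_def)
qed

lemma down_crossings_after_vert:
  assumes "k \<in> verts"
  shows "{t \<in> {Suc k..<length g}. L (Suc t) < L k + m + n \<and> L k + m + n < L t} =
    {i \<in> kstar_old m n g k. k < i}"
proof (intro set_eqI)
  fix t
  show "t \<in> {t \<in> {Suc k..<length g}. L (Suc t) < L k + m + n \<and> L k + m + n < L t} \<longleftrightarrow>
      t \<in> {i \<in> kstar_old m n g k. k < i}"
  proof (cases "t < length g")
    case True
    then show ?thesis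
      using level_Suc_cases[OF True, of m n] level_neq_outer_level[OF assms, of t]
        level_neq_outer_level[OF assms, of "Suc t"] m_pos
      by (auto simp: kstar_old_def Suc_le_eq)
  qed (auto simp: kstar_old_def is_horiz_def)
qed

lemma card_kstar_old_after:
  assumes "k \<in> verts"
  shows "card {i \<in> kstar_old m n g k. k < i} = card (crossing_verts k)"
proof -
  have k: "k < length g"
    using assms by (simp add: is_vert_def)
  have "\<not> L k + m + n < L (Suc k)" "\<not> L k + m + n < L (length g)"
    using assms level_nonneg[of k] k n_pos by (auto simp: level_Suc_vert level_length)
  moreover have "card (crossing_verts k) + of_bool (L k + m + n < L (Suc k)) =
      card {i \<in> kstar_old m n g k. k < i} + of_bool (L k + m + n < L (length g))"
    unfolding up_crossings_after_vert[OF assms, symmetric] down_crossings_after_vert[OF assms, symmetric]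
    using k level_neq_outer_level[OF assms] by (intro up_crossings_eq_down_crossings) auto
  ultimately show ?thesis
    by simp
qed

lemma sum_card_kstar_old:
  "(\<Sum>k\<in>verts. card (kstar_old m n g k)) =
     card (Hstar_old m n g - Hset m n g) + (\<Sum>k\<in>verts. card (crossing_verts k))"
proof -
  have "card (kstar_old m n g k) = card {i \<in> kstar_old m n g k. i < k} + card {i \<in> kstar_old m n g k. k < i}"
    if "k \<in> verts" for k
  proof -
    have "kstar_old m n g k = {i \<in> kstar_old m n g k. i < k} \<union> {i \<in> kstar_old m n g k. k < i}"
      using that by (auto simp: kstar_old_def is_horiz_def is_vert_def) (metis linorder_neqE_nat)
    then show ?thesis
      using finite_kstar_old[of m n g k] by (metis (no_types, lifting) card_Un_disjoint
          disjoint_iff finite_Un less_asym mem_Collect_eq)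
  qed
  then have "(\<Sum>k\<in>verts. card (kstar_old m n g k)) =
      card (Sigma verts (\<lambda>k. {i \<in> kstar_old m n g k. i < k})) + (\<Sum>k\<in>verts. card (crossing_verts k))"
    using finite_verts finite_kstar_old card_kstar_old_after by (simp add: sum.distrib)
  also have "Sigma verts (\<lambda>k. {i \<in> kstar_old m n g k. i < k}) = (Hstar_old m n g - Hset m n g)\<inverse>"
  proof (intro set_eqI)
    fix x :: "nat \<times> nat"
    obtain k i where x: "x = (k, i)"
      by fastforce
    have "L i \<noteq> L k + int (m + n)" if "is_horiz g i" "is_vert g k"
      using that level_neq_shift by (simp add: is_horiz_def is_vert_def)
    then show "x \<in> Sigma verts (\<lambda>k. {i \<in> kstar_old m n g k. i < k}) \<longleftrightarrow> x \<in> (Hstar_old m n g - Hset m n g)\<inverse>"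
      unfolding x by (auto simp: kstar_old_def Hstar_old_def Hset_eq_levels)
  qed
  finally show ?thesis
    by simp
qed

lemma card_Hstar_ins:
  "card (Hstar_ins m n g) = (\<Sum>k\<in>verts. card (crossing_verts k)) + (\<Sum>k\<in>verts. card (kstar_ins m n g k))"
proof -
  define lo where "lo = {(k, j) \<in> Hstar_ins m n g. L k < L j \<and> L j < L k + n}"
  define hi where "hi = {(k, j) \<in> Hstar_ins m n g. L j < L k}"
  have fin: "finite lo" "finite hi" "finite (Sigma verts crossing_verts)"
    using finite_verts finite_crossing_verts
    by (auto simp: lo_def hi_def intro: finite_subset[OF _ finite_Hstar_ins])
  have neq: "L j \<noteq> L k" "L j \<noteq> L k + n" if "(k, j) \<in> Hstar_ins m n g" for k j
    using that vert_levels_neq[of j k] by (auto simp: Hstar_ins_def)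
  have "Hstar_ins m n g = (Sigma verts crossing_verts \<union> lo) \<union> hi"
    using neq by (fastforce simp: Hstar_ins_def crossing_verts_def lo_def hi_def)
  moreover have "Sigma verts crossing_verts \<inter> lo = {}" "(Sigma verts crossing_verts \<union> lo) \<inter> hi = {}"
    by (auto simp: crossing_verts_def lo_def hi_def)
  ultimately have "card (Hstar_ins m n g) = (\<Sum>k\<in>verts. card (crossing_verts k)) + card lo + card hi"
    using fin finite_verts finite_crossing_verts by (simp add: card_Un_disjoint)
  moreover have "(\<Sum>k\<in>verts. card (kstar_ins m n g k)) = card (Sigma verts (kstar_ins m n g))"
    using finite_verts finite_kstar_ins by simp
  moreover have "Sigma verts (kstar_ins m n g) = lo \<union> hi\<inverse>"
  proof (intro set_eqI)
    fix x :: "nat \<times> nat"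
    obtain k k' where x: "x = (k, k')"
      by fastforce
    have "L k' \<noteq> L k" "L k' \<noteq> L k + n" if "is_vert g k" "is_vert g k'" "k' \<noteq> k"
      using that vert_levels_neq by auto
    then show "x \<in> Sigma verts (kstar_ins m n g) \<longleftrightarrow> x \<in> lo \<union> hi\<inverse>"
      unfolding x by (auto simp: kstar_ins_def lo_def hi_def Hstar_ins_def)
  qed
  moreover have "lo \<inter> hi\<inverse> = {}"
    by (auto simp: lo_def hi_def Hstar_ins_def)
  ultimately show ?thesis
    using fin by (simp add: card_Un_disjoint)
qed

end

theorem mainTheorem7:
  fixes m n :: nat and \<gamma> :: "bool list"
  assumes "0 < m" and "0 < n" and "coprime m n"
    and "\<gamma> \<in> dyck m n"
  shows "int (hstat m n \<gamma>) =
           int (hstat (m + n) n (star \<gamma>))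
           - (\<Sum>i\<in>Vset (m + n) n (star \<gamma>). int (kval (m + n) n (star \<gamma>) i))"
proof -
  interpret dyck_path m n \<gamma>
    using assms by unfold_locales
  have "hstat (m + n) n (star \<gamma>) = card (Hstar_old m n \<gamma>) + card (Hstar_ins m n \<gamma>)"
    by (rule hstat_star)
  also have "\<dots> = hstat m n \<gamma> + card (Hstar_old m n \<gamma> - Hset m n \<gamma>) + card (Hstar_ins m n \<gamma>)"
    by (simp add: card_Hstar_old)
  also have "\<dots> = hstat m n \<gamma> + (\<Sum>k\<in>verts. card (kstar_old m n \<gamma> k) + card (kstar_ins m n \<gamma> k))"
    by (simp add: sum_card_kstar_old card_Hstar_ins sum.distrib)
  also have "\<dots> = hstat m n \<gamma> + (\<Sum>p\<in>Vset (m + n) n (star \<gamma>). kval (m + n) n (star \<gamma>) p)"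
    by (simp add: sum_kval_Vset)
  finally show ?thesis
    by (simp add: of_nat_sum)
qed

end
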